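(* Under the setting and assumptions described in the context, the following hold: $\lim_{M\to\infty}\sup_{r>0}\frac{\Psi^*(r)}{\Psi^*(Mr)}=0$; $\int_{\mathbb R^d}e^{-t\Psi(\xi)}d\xi<\infty$ for every $t>0$; and there is $c\ge1$ with $\Psi^*(r)\le c\,\Psi_1^*(r)$ for all $r>0$.
   Context: Let $d\ge1$ and let $X$ be a symmetric Lévy process on $\mathbb R^d$ with Lévy exponent $\Psi(\xi)=\sum_{i,j=1}^d a_{ij}\xi_i\xi_j+\int_{\mathbb R^d}(1-\cos(\xi\cdot y))J(y)\,dy$ (i.e. $\mathbb E_x[e^{i\xi\cdot(X_t-X_0)}]=e^{-t\Psi(\xi)}$), $A=(a_{ij})$ constant symmetric nonnegative definite, $J\ge0$ symmetric on $\mathbb R^d\setminus\{0\}$ with $\int(1\wedge|z|^2)J(z)dz<\infty$. Put $\Psi^*(r)=\sup_{|z|\le r}\Psi(z)$, $\Psi_1^*(r)=\sup_{s\in(-r,r)}\Psi((0,\dots,0,s))$. Assumptions: (UJS) there is $c>0$ with $J(y)\le\frac{c}{r^d}\int_{B(0,r)}J(y-z)dz$ for all $y$ and $0<r\le|y|/2$. $\psi_1$ is increasing on $[0,\infty)$, $\psi_1(r)=1$ for $0<r\le1$, and for constants $0<b_1\le b_2$, $0<\gamma_1\le\gamma_2$, $\beta\in[0,\infty]$: $b_1e^{\gamma_1r^\beta}\le\psi_1(r)\le b_2e^{\gamma_2r^\beta}$ for $r>1$ (for $\beta=\infty$: $\psi_1(r)=\infty$ for $r>1$, $1/\infty=0$).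 $\phi_1$ is strictly increasing on $[0,\infty)$, $\phi_1(0)=0$, $\phi_1(1)=1$, and $a_3(R/r)^{\beta_1}\le\phi_1(R)/\phi_1(r)\le a_4(R/r)^{\beta_2}$ for $0<r<R$, with constants $a_3,a_4>0$, $0<\beta_1\le\beta_2<2$. There are $\gamma\ge1$, $\kappa_1,\kappa_2>0$, $a_0\ge0$ with $\gamma^{-1}a_0|\xi|^2\le\sum a_{ij}\xi_i\xi_j\le\gamma a_0|\xi|^2$ and $\gamma^{-1}\frac1{|x|^d\phi_1(|x|)\psi_1(\kappa_2|x|)}\le J(x)\le\gamma\frac1{|x|^d\phi_1(|x|)\psi_1(\kappa_1|x|)}$ for $x\ne0$. *)

theory Defs
  imports "HOL-Analysis.Analysis"
begin

definition levy_exponent :: "real^'n^'n \<Rightarrow> (real^'n \<Rightarrow> real) \<Rightarrow> real^'n \<Rightarrow> real" where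
  "levy_exponent A J \<xi> = \<xi> \<bullet> (A *v \<xi>) + (LINT y|lborel. (1 - cos (\<xi> \<bullet> y)) * J y)"

definition Psi_star :: "(real^'n \<Rightarrow> real) \<Rightarrow> real \<Rightarrow> real" where
  "Psi_star \<Psi> r = (SUP z\<in>cball 0 r. \<Psi> z)"

definition Psi1_star :: "(real^'n \<Rightarrow> real) \<Rightarrow> 'n \<Rightarrow> real \<Rightarrow> real" where
  "Psi1_star \<Psi> k r = (SUP s\<in>{-r<..<r}. \<Psi> (axis k s))"

end

theory Submission
  imports Defs "HOL-Probability.Sinc_Integral"
begin

text \<open>Write \<Psi> = Q + I with Q \<asymp> a0 |\<xi>|^2 and I(\<xi>) = \<integral> (1 - cos (\<xi> \<bullet> y)) J(y) dy. Up to \<psi>1, which is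
  increasing and equal to 1 near the origin, J is comparable to 1 / (|y|^d \<phi>1(|y|)). Substituting y = z / M
  therefore gives I(M \<xi>) \<ge> c M^\<beta>1 I(\<xi>) for large M, hence \<Psi>*(r) / \<Psi>*(M r) \<le> M^-\<beta>1 / c.
  Integrating over a cube of side about 1/|\<xi>| around \<xi> / |\<xi>|^2, where 1 - cos (\<xi> \<bullet> y) is bounded below,
  gives \<Psi>(\<xi>) \<ge> c |\<xi>|^\<beta>1 - C, so exp (-t \<Psi>) is dominated by a product of integrable functions of the
  coordinates. Finally, 1 - cos of a sum of d terms is at most d times the sum of the 1 - cos of the terms,
  J is comparable to its composition with a coordinate transposition followed by a contraction, and
  \<Psi>(2 \<xi>) \<le> 4 \<Psi>(\<xi>); together these bound \<Psi> on a ball by its values on a single coordinate axis.\<close>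

section \<open>Elementary inequalities and Lebesgue measure on real^'n\<close>

lemma one_minus_cos_le_half_square: "1 - cos (x::real) \<le> x^2 / 2"
proof -
  have "cos x = 1 - 2 * sin (x/2)^2" using cos_double_sin[of "x/2"] by simp
  moreover have "sin (x/2)^2 \<le> (x/2)^2"
    using abs_sin_x_le_abs_x[of "x/2"] by (metis abs_ge_zero power2_abs power_mono)
  ultimately show ?thesis by (simp add: power_divide)
qed

lemma one_minus_cos_double_le: "1 - cos (2 * x::real) \<le> 4 * (1 - cos x)"
proof -
  have "1 - cos (2 * x) = 2 * (1 - cos x) * (1 + cos x)"
    using cos_double_cos[of x] by (simp add: algebra_simps power2_eq_square)
  also have "\<dots> \<le> 2 * (1 - cos x) * 2"
    by (intro mult_left_mono) auto
  finally show ?thesis by simp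
qed

lemma abs_sin_sum_le:
  assumes "finite I" shows "\<bar>sin (\<Sum>i\<in>I. f i)\<bar> \<le> (\<Sum>i\<in>I. \<bar>sin (f i::real)\<bar>)"
  using assms
proof (induction I rule: finite_induct)
  case (insert x F)
  have "\<bar>sin (f x + sum f F)\<bar> \<le> \<bar>sin (f x)\<bar> * \<bar>cos (sum f F)\<bar> + \<bar>cos (f x)\<bar> * \<bar>sin (sum f F)\<bar>"
    by (simp add: sin_add abs_mult[symmetric] abs_triangle_ineq)
  also have "\<dots> \<le> \<bar>sin (f x)\<bar> + \<bar>sin (sum f F)\<bar>"
    by (intro add_mono mult_right_le_one_le mult_left_le_one_le) auto
  finally show ?case using insert by simp
qed simp

lemma one_minus_cos_sum_le:
  assumes "finite I"
  shows "1 - cos (\<Sum>i\<in>I. f i) \<le> real (card I) * (\<Sum>i\<in>I. 1 - cos (f i::real))"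
proof -
  have half_angle: "1 - cos y = 2 * sin (y/2)^2" for y::real
    using cos_double_sin[of "y/2"] by simp
  have "sin ((\<Sum>i\<in>I. f i)/2)^2 = \<bar>sin (\<Sum>i\<in>I. f i/2)\<bar>^2"
    by (simp add: sum_divide_distrib)
  also have "\<dots> \<le> (\<Sum>i\<in>I. \<bar>sin (f i/2)\<bar>)^2"
    by (intro power_mono abs_sin_sum_le assms) auto
  also have "\<dots> \<le> (\<Sum>i\<in>I. \<bar>sin (f i/2)\<bar>^2) * real (card I)"
    by (rule sum_squared_le_sum_of_squares)
  finally have "sin ((\<Sum>i\<in>I. f i)/2)^2 \<le> real (card I) * (\<Sum>i\<in>I. sin (f i/2)^2)"
    by (simp add: mult.commute)
  then show ?thesis unfolding half_angle by (simp add: sum_distrib_left[symmetric])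
qed

lemma nn_integral_lborel_scaleR:
  fixes f :: "'a::euclidean_space \<Rightarrow> ennreal"
  assumes [measurable]: "f \<in> borel_measurable borel" and c: "c > 0"
  shows "(\<integral>\<^sup>+x. f x \<partial>lborel) = ennreal (c ^ DIM('a)) * (\<integral>\<^sup>+x. f (c *\<^sub>R x) \<partial>lborel)"
proof -
  have "(\<integral>\<^sup>+x. f x \<partial>lborel)
      = (\<integral>\<^sup>+x. f x \<partial>density (distr lborel borel (\<lambda>x. 0 + c *\<^sub>R x)) (\<lambda>_. \<bar>c\<bar>^DIM('a)))"
    using arg_cong[OF lborel_affine[of c "0::'a"], of "\<lambda>M. \<integral>\<^sup>+x. f x \<partial>M"] c by simp
  also have "\<dots> = (\<integral>\<^sup>+x. ennreal (\<bar>c\<bar>^DIM('a)) * f x \<partial>distr lborel borel (\<lambda>x. 0 + c *\<^sub>R x))"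
    by (subst nn_integral_density) auto
  also have "\<dots> = (\<integral>\<^sup>+x. ennreal (\<bar>c\<bar>^DIM('a)) * f (c *\<^sub>R x) \<partial>lborel)"
    by (subst nn_integral_distr) auto
  also have "\<dots> = ennreal (c ^ DIM('a)) * (\<integral>\<^sup>+x. f (c *\<^sub>R x) \<partial>lborel)"
    using c by (subst nn_integral_cmult) auto
  finally show ?thesis .
qed

lemma norm_axis_real: "norm (axis i (c::real) :: real^'n) = \<bar>c\<bar>"
  by (simp add: norm_eq_sqrt_inner inner_axis_axis)

definition permute_coords :: "('n \<Rightarrow> 'n) \<Rightarrow> real^'n \<Rightarrow> real^'n" where
  "permute_coords p x = (\<chi> k. x $ p k)"

lemma permute_coords_nth [simp]: "permute_coords p x $ k = x $ p k"
  by (simp add: permute_coords_def)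

lemma linear_permute_coords: "linear (permute_coords p)"
  by (auto simp: linear_iff vec_eq_iff)

lemma measurable_permute_coords [measurable]: "permute_coords p \<in> borel_measurable borel"
  by (intro borel_measurable_continuous_onI linear_continuous_on
      linear_permute_coords[THEN linear_conv_bounded_linear[THEN iffD1]])

lemma norm_permute_coords:
  assumes "p permutes UNIV" shows "norm (permute_coords p x) = norm x"
proof -
  have "(\<Sum>k\<in>UNIV. (x $ p k)^2) = (\<Sum>k\<in>UNIV. (x $ k)^2)"
    using sum.permute[OF assms, of "\<lambda>k. (x $ k)^2"] by (simp add: o_def)
  then show ?thesis by (simp add: norm_vec_def L2_set_def)
qed

lemma prod_Basis_cart: "(\<Prod>b\<in>(Basis::(real^'n) set). f b) = (\<Prod>k\<in>UNIV. f (axis k 1))"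
proof -
  have "(Basis::(real^'n) set) = range (\<lambda>k. axis k 1)"
    by (auto simp: Basis_vec_def)
  moreover have "inj (\<lambda>k::'n. axis k (1::real))"
    by (auto simp: inj_def axis_eq_axis)
  ultimately show ?thesis
    using prod.reindex[of "\<lambda>k::'n. axis k (1::real)" UNIV f] by (simp add: o_def)
qed

lemma distr_lborel_permute_coords:
  assumes p: "p permutes UNIV"
  shows "distr lborel borel (permute_coords p) = (lborel :: (real^'n) measure)"
proof (rule lborel_eqI[symmetric])
  fix l u :: "real^'n"
  assume le: "\<And>b. b \<in> Basis \<Longrightarrow> l \<bullet> b \<le> u \<bullet> b"
  have "permute_coords p -` box l u = box (permute_coords (inv p) l) (permute_coords (inv p) u)"
  proof (intro set_eqI)
    fix x
    have "(\<forall>k. l $ k < x $ p k \<and> x $ p k < u $ k) \<longleftrightarrow> (\<forall>k. l $ inv p k < x $ k \<and> x $ k < u $ inv p k)"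
      using p by (metis permutes_inverses)
    then show "x \<in> permute_coords p -` box l u \<longleftrightarrow> x \<in> box (permute_coords (inv p) l) (permute_coords (inv p) u)"
      by (simp add: mem_box_cart)
  qed
  then have "emeasure (distr lborel borel (permute_coords p)) (box l u)
      = emeasure lborel (box (permute_coords (inv p) l) (permute_coords (inv p) u))"
    by (simp add: emeasure_distr)
  also have "\<dots> = (\<Prod>b\<in>Basis. (permute_coords (inv p) u - permute_coords (inv p) l) \<bullet> b)"
  proof (rule emeasure_lborel_box)
    fix b :: "real^'n" assume "b \<in> Basis"
    then obtain k where "b = axis k 1" by (auto simp: Basis_vec_def)
    moreover have "l $ inv p k \<le> u $ inv p k"
      using le[of "axis (inv p k) 1"] by (auto simp: Basis_vec_def cart_eq_inner_axis[symmetric] inner_axis)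
    ultimately show "permute_coords (inv p) l \<bullet> b \<le> permute_coords (inv p) u \<bullet> b"
      by (simp add: inner_axis)
  qed
  also have "\<dots> = (\<Prod>k\<in>UNIV. u $ inv p k - l $ inv p k)"
    by (simp add: prod_Basis_cart inner_axis)
  also have "\<dots> = (\<Prod>k\<in>UNIV. u $ k - l $ k)"
    using prod.permute[OF permutes_inv[OF p], of "\<lambda>k. u $ k - l $ k"] by (simp add: o_def)
  also have "\<dots> = (\<Prod>b\<in>Basis. (u - l) \<bullet> b)"
    by (simp add: prod_Basis_cart inner_axis)
  finally show "emeasure (distr lborel borel (permute_coords p)) (box l u) = (\<Prod>b\<in>Basis. (u - l) \<bullet> b)" .
qed simp

lemma nn_integral_permute_coords:
  assumes "p permutes UNIV" and [measurable]: "f \<in> borel_measurable borel"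
  shows "(\<integral>\<^sup>+x. f (permute_coords p x) \<partial>lborel) = (\<integral>\<^sup>+x. f x \<partial>(lborel :: (real^'n) measure))"
  by (subst (2) distr_lborel_permute_coords[OF assms(1), symmetric]) (simp add: nn_integral_distr)

lemma emeasure_lborel_cube:
  fixes c :: "'a::euclidean_space" and h :: real
  assumes "h \<ge> 0"
  shows "emeasure lborel (cbox (c - h *\<^sub>R One) (c + h *\<^sub>R One)) = ennreal ((2 * h) ^ DIM('a))"
  using assms by (simp add: emeasure_lborel_cbox_eq inner_diff_left inner_add_left algebra_simps)

lemma norm_diff_le_in_cube:
  fixes c :: "'a::euclidean_space" and h :: real
  assumes "y \<in> cbox (c - h *\<^sub>R One) (c + h *\<^sub>R One)"
  shows "norm (y - c) \<le> DIM('a) * h"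
proof -
  have "\<bar>(y - c) \<bullet> b\<bar> \<le> h" if "b \<in> Basis" for b
    using assms that by (auto simp: mem_box inner_diff_left inner_add_left abs_le_iff algebra_simps)
  then have "(\<Sum>b\<in>Basis. \<bar>(y - c) \<bullet> b\<bar>) \<le> DIM('a) * h"
    using sum_bounded_above[of Basis "\<lambda>b. \<bar>(y - c) \<bullet> b\<bar>" h] by simp
  then show ?thesis using norm_le_l1[of "y - c"] by linarith
qed

section \<open>Consequences of growth conditions on a function on real^'n\<close>

lemma exp_neg_abs_powr_le_inverse_1_plus_square:
  fixes b \<beta> :: real
  assumes b: "b > 0" and \<beta>: "\<beta> > 0"
  obtains K where "\<And>x. exp (- b * \<bar>x\<bar> powr \<beta>) \<le> K * inverse (1 + x^2)"
proof -
  define n where "n = nat \<lceil>2 / \<beta>\<rceil>"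
  have "real n \<ge> 2 / \<beta>" unfolding n_def by linarith
  then have n\<beta>: "real n * \<beta> \<ge> 2" using \<beta> by (simp add: field_simps)
  then have n: "n \<ge> 1" using \<beta> by (cases n) auto
  have "exp (- b * \<bar>x\<bar> powr \<beta>) \<le> 2 * max 1 ((n / b) ^ n) * inverse (1 + x^2)"
    for x :: real
  proof (cases "\<bar>x\<bar> \<le> 1")
    case True
    then have "x^2 \<le> 1" by (metis abs_ge_zero abs_one power2_abs power_mono power_one)
    then have "1 \<le> 2 / (1 + x^2)" by (simp add: le_divide_eq add_pos_nonneg)
    then have "1 \<le> 2 * inverse (1 + x^2)" by (simp add: divide_inverse)
    also have "\<dots> \<le> 2 * max 1 ((n / b) ^ n) * inverse (1 + x^2)"
      by (intro mult_right_mono) auto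
    finally have "1 \<le> 2 * max 1 ((n / b) ^ n) * inverse (1 + x^2)" .
    moreover have "exp (- b * \<bar>x\<bar> powr \<beta>) \<le> 1" using b by simp
    ultimately show ?thesis by linarith
  next
    case False
    define u where "u = b * \<bar>x\<bar> powr \<beta>"
    have u: "u \<ge> 0" using b by (simp add: u_def)
    have "u / n \<le> exp (u / n)" using exp_ge_add_one_self[of "u / n"] by linarith
    then have "(u / n) ^ n \<le> exp (u / n) ^ n" using u by (intro power_mono) auto
    also have "\<dots> = exp u" using n by (simp add: exp_of_nat_mult[symmetric])
    finally have "(u / n) ^ n \<le> exp u" .
    moreover have "(u / n) ^ n = (b / n) ^ n * \<bar>x\<bar> powr (n * \<beta>)"
      using False by (simp add: u_def power_divide power_mult_distrib powr_power field_simps)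
    moreover have "\<bar>x\<bar> powr 2 \<le> \<bar>x\<bar> powr (n * \<beta>)"
      using False n\<beta> by (intro powr_mono) auto
    moreover have "(1 + x^2) / 2 \<le> \<bar>x\<bar> powr 2"
      using False one_le_power[of "\<bar>x\<bar>" 2] by (simp add: powr_numeral)
    ultimately have "(b / n) ^ n * ((1 + x^2) / 2) \<le> exp u"
      using b by (smt (verit) mult_left_mono zero_le_power divide_nonneg_nonneg of_nat_0_le_iff)
    then have "exp (- u) \<le> inverse ((b / n) ^ n * ((1 + x^2) / 2))"
      unfolding exp_minus using b n by (intro le_imp_inverse_le) (auto intro!: mult_pos_pos add_pos_nonneg)
    also have "\<dots> = 2 * (n / b) ^ n * inverse (1 + x^2)"
      using b n by (simp add: field_simps power_divide)
    also have "\<dots> \<le> 2 * max 1 ((n / b) ^ n) * inverse (1 + x^2)"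
      by (intro mult_right_mono) auto
    finally show ?thesis by (simp add: u_def)
  qed
  then show ?thesis using that by blast
qed

lemma integrable_exp_neg_abs_powr:
  fixes b \<beta> :: real
  assumes "b > 0" and "\<beta> > 0"
  shows "integrable lborel (\<lambda>x::real. exp (- b * \<bar>x\<bar> powr \<beta>))"
proof -
  obtain K where K: "\<And>x. exp (- b * \<bar>x\<bar> powr \<beta>) \<le> K * inverse (1 + x^2)"
    using exp_neg_abs_powr_le_inverse_1_plus_square[OF assms] by blast
  have "integrable lborel (\<lambda>x::real. inverse (1 + x^2))"
    using integrable_inverse_1_plus_square by (simp add: set_integrable_def einterval_iff)
  then show ?thesis
    by (rule Bochner_Integration.integrable_bound[OF integrable_mult_right[where c=K]])
      (auto intro!: AE_I2 order_trans[OF _ abs_ge_self] simp: K[simplified])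
qed

lemma integrable_prod_coords:
  fixes h :: "real \<Rightarrow> real"
  assumes [measurable]: "h \<in> borel_measurable borel" and h_nonneg: "\<And>x. h x \<ge> 0"
    and "integrable lborel h"
  shows "integrable lborel (\<lambda>\<xi>::real^'n. \<Prod>i\<in>UNIV. h (\<xi> $ i))"
proof (subst integrable_iff_bounded, intro conjI)
  show "(\<lambda>\<xi>::real^'n. \<Prod>i\<in>UNIV. h (\<xi> $ i)) \<in> borel_measurable lborel" by measurable
  have fin: "(\<integral>\<^sup>+x. ennreal (h x) \<partial>lborel) < \<infinity>"
    using assms by (simp add: integrable_iff_bounded)
  have "ennreal (norm (\<Prod>i\<in>UNIV. h (\<xi> $ i))) = (\<Prod>b\<in>Basis. ennreal (h (\<xi> \<bullet> b)))" for \<xi> :: "real^'n"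
    using h_nonneg by (simp add: prod_nonneg prod_ennreal prod_Basis_cart inner_axis)
  then have "(\<integral>\<^sup>+\<xi>. ennreal (norm (\<Prod>i\<in>UNIV. h ((\<xi>::real^'n) $ i))) \<partial>lborel)
      = (\<Prod>b\<in>(Basis::(real^'n) set). (\<integral>\<^sup>+x. ennreal (h x) \<partial>lborel))"
    by (simp only:) (rule nn_integral_lborel_prod[where f="\<lambda>b x. ennreal (h x)"], auto)
  also have "\<dots> < \<infinity>" using fin by (simp add: power_less_top_ennreal)
  finally show "(\<integral>\<^sup>+\<xi>. ennreal (norm (\<Prod>i\<in>UNIV. h ((\<xi>::real^'n) $ i))) \<partial>lborel) < \<infinity>" .
qed

lemma integrable_exp_neg_of_powr_lower_bound:
  fixes \<Psi> :: "real^'n \<Rightarrow> real"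
  assumes [measurable]: "\<Psi> \<in> borel_measurable lborel"
    and c: "c > 0" and \<beta>: "\<beta> > 0" and t: "t > 0"
    and lower: "\<And>\<xi>. c * norm \<xi> powr \<beta> - C \<le> \<Psi> \<xi>"
  shows "integrable lborel (\<lambda>\<xi>. exp (- t * \<Psi> \<xi>))"
proof -
  define b where "b = t * c / CARD('n)"
  have b: "b > 0" using t c by (simp add: b_def)
  define h where "h x = exp (- b * \<bar>x\<bar> powr \<beta>)" for x :: real
  have "integrable lborel (\<lambda>\<xi>::real^'n. exp (t * C) * (\<Prod>i\<in>UNIV. h (\<xi> $ i)))"
    unfolding h_def by (intro integrable_mult_right integrable_prod_coords integrable_exp_neg_abs_powr b \<beta>) auto
  then show ?thesis
  proof (rule Bochner_Integration.integrable_bound)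
    show "AE \<xi> in lborel. norm (exp (- t * \<Psi> \<xi>)) \<le> norm (exp (t * C) * (\<Prod>i\<in>UNIV. h (\<xi> $ i)))"
    proof (intro AE_I2)
      fix \<xi> :: "real^'n"
      have "b * (\<Sum>i\<in>UNIV. \<bar>\<xi> $ i\<bar> powr \<beta>) \<le> b * (\<Sum>i\<in>(UNIV::'n set). norm \<xi> powr \<beta>)"
        using \<beta> b by (intro mult_left_mono sum_mono powr_mono2 component_le_norm_cart) auto
      also have "\<dots> = t * (c * norm \<xi> powr \<beta>)" by (simp add: b_def)
      also have "\<dots> \<le> t * (\<Psi> \<xi> + C)" using lower[of \<xi>] t by (intro mult_left_mono) auto
      finally have "- t * \<Psi> \<xi> \<le> t * C + (\<Sum>i\<in>UNIV. - b * \<bar>\<xi> $ i\<bar> powr \<beta>)"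
        by (simp add: sum_negf sum_distrib_left algebra_simps)
      then have "exp (- t * \<Psi> \<xi>) \<le> exp (t * C + (\<Sum>i\<in>UNIV. - b * \<bar>\<xi> $ i\<bar> powr \<beta>))"
        by (simp del: mult_minus_left)
      also have "\<dots> = exp (t * C) * (\<Prod>i\<in>UNIV. h (\<xi> $ i))"
        by (simp add: h_def exp_add exp_sum)
      finally have "exp (- t * \<Psi> \<xi>) \<le> exp (t * C) * (\<Prod>i\<in>UNIV. h (\<xi> $ i))" .
      then show "norm (exp (- t * \<Psi> \<xi>)) \<le> norm (exp (t * C) * (\<Prod>i\<in>UNIV. h (\<xi> $ i)))"
        by (simp add: h_def prod_nonneg)
    qed
  qed measurable
qed

lemma Psi_star_nonneg:
  assumes "\<And>\<xi>. \<Psi> \<xi> \<ge> 0" and "bdd_above (\<Psi> ` cball 0 r)" and "r \<ge> 0"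
  shows "Psi_star \<Psi> r \<ge> 0"
  unfolding Psi_star_def using assms by (intro cSUP_upper2[where x=0]) auto

lemma Psi_star_scale:
  fixes \<Psi> :: "real^'n \<Rightarrow> real"
  assumes bdd: "bdd_above (\<Psi> ` cball 0 (M * r))" and r: "r \<ge> 0" and M: "M > 0"
    and scale: "\<And>\<xi>. c * \<Psi> \<xi> \<le> \<Psi> (M *\<^sub>R \<xi>)" and c: "c > 0"
  shows "c * Psi_star \<Psi> r \<le> Psi_star \<Psi> (M * r)"
proof -
  have "\<Psi> z \<le> Psi_star \<Psi> (M * r) / c" if "z \<in> cball 0 r" for z
  proof -
    have "M *\<^sub>R z \<in> cball 0 (M * r)" using that M by auto
    then have "\<Psi> (M *\<^sub>R z) \<le> Psi_star \<Psi> (M * r)"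
      unfolding Psi_star_def using bdd by (rule cSUP_upper)
    with scale[of z] c show ?thesis by (simp add: field_simps)
  qed
  then have "Psi_star \<Psi> r \<le> Psi_star \<Psi> (M * r) / c"
    unfolding Psi_star_def[of \<Psi> r] using r by (intro cSUP_least) auto
  then show ?thesis using c by (simp add: field_simps)
qed

lemma Psi_star_ratio_tendsto_zero:
  fixes \<Psi> :: "real^'n \<Rightarrow> real"
  assumes nonneg: "\<And>\<xi>. \<Psi> \<xi> \<ge> 0" and bdd: "\<And>r. bdd_above (\<Psi> ` cball 0 r)"
    and c: "c > 0" and \<beta>: "\<beta> > 0"
    and scale: "\<And>M \<xi>. M \<ge> M0 \<Longrightarrow> c * M powr \<beta> * \<Psi> \<xi> \<le> \<Psi> (M *\<^sub>R \<xi>)"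
  shows "((\<lambda>M. SUP r\<in>{0<..}. Psi_star \<Psi> r / Psi_star \<Psi> (M * r)) \<longlongrightarrow> 0) at_top"
proof (rule tendsto_sandwich[where f="\<lambda>_. 0" and h="\<lambda>M. inverse c * M powr (- \<beta>)"])
  have ratio_bounds: "0 \<le> Psi_star \<Psi> r / Psi_star \<Psi> (M * r)"
    "Psi_star \<Psi> r / Psi_star \<Psi> (M * r) \<le> inverse c * M powr (- \<beta>)"
    if M: "M \<ge> max 1 M0" and r: "r > 0" for M r
  proof -
    have cM: "c * M powr \<beta> > 0" using c M by simp
    have sc: "c * M powr \<beta> * Psi_star \<Psi> r \<le> Psi_star \<Psi> (M * r)"
      using M r cM by (intro Psi_star_scale[where c="c * M powr \<beta>"] bdd scale) auto
    have nn: "Psi_star \<Psi> r \<ge> 0" "Psi_star \<Psi> (M * r) \<ge> 0"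
      using r M by (auto intro!: Psi_star_nonneg nonneg bdd)
    then show "0 \<le> Psi_star \<Psi> r / Psi_star \<Psi> (M * r)" by simp
    have "Psi_star \<Psi> r / Psi_star \<Psi> (M * r) \<le> inverse (c * M powr \<beta>)"
      using sc nn cM by (cases "Psi_star \<Psi> (M * r) = 0") (auto simp: field_simps)
    then show "Psi_star \<Psi> r / Psi_star \<Psi> (M * r) \<le> inverse c * M powr (- \<beta>)"
      using M by (simp add: powr_minus)
  qed
  have eventually_M: "\<forall>\<^sub>F M in at_top. M \<ge> max 1 M0" by (rule eventually_ge_at_top)
  show "\<forall>\<^sub>F M in at_top. 0 \<le> (SUP r\<in>{0<..}. Psi_star \<Psi> r / Psi_star \<Psi> (M * r))"
    using eventually_M
  proof eventually_elim
    case (elim M)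
    have "bdd_above ((\<lambda>r. Psi_star \<Psi> r / Psi_star \<Psi> (M * r)) ` {0<..})"
      using ratio_bounds(2)[OF elim] by (intro bdd_aboveI2) auto
    then show ?case using ratio_bounds(1)[OF elim, of 1] by (intro cSUP_upper2[where x=1]) auto
  qed
  show "\<forall>\<^sub>F M in at_top. (SUP r\<in>{0<..}. Psi_star \<Psi> r / Psi_star \<Psi> (M * r)) \<le> inverse c * M powr (- \<beta>)"
    using eventually_M by eventually_elim (use ratio_bounds in \<open>auto intro!: cSUP_least\<close>)
  have "((\<lambda>M::real. M powr (- \<beta>)) \<longlongrightarrow> 0) at_top"
    using \<beta> by (intro tendsto_neg_powr filterlim_ident) auto
  then show "((\<lambda>M. inverse c * M powr (- \<beta>)) \<longlongrightarrow> 0) at_top"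
    by (rule tendsto_mult_right_zero)
qed simp

lemma doubling_power_le:
  fixes \<Psi> :: "'a::real_vector \<Rightarrow> real"
  assumes "\<And>\<xi>. \<Psi> (2 *\<^sub>R \<xi>) \<le> 4 * \<Psi> \<xi>"
  shows "\<Psi> ((2 ^ m) *\<^sub>R \<xi>) \<le> 4 ^ m * \<Psi> \<xi>"
proof (induction m)
  case (Suc m)
  have "\<Psi> ((2 ^ Suc m) *\<^sub>R \<xi>) = \<Psi> (2 *\<^sub>R ((2 ^ m) *\<^sub>R \<xi>))" by simp
  also have "\<dots> \<le> 4 * \<Psi> ((2 ^ m) *\<^sub>R \<xi>)" by (rule assms)
  also have "\<dots> \<le> 4 * (4 ^ m * \<Psi> \<xi>)" using Suc by simp
  finally show ?case by simp
qed simp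

lemma Psi_star_le_Psi1_star:
  fixes \<Psi> :: "real^'n \<Rightarrow> real" and k :: 'n
  assumes nonneg: "\<And>\<xi>. \<Psi> \<xi> \<ge> 0" and bdd: "\<And>r. bdd_above (\<Psi> ` cball 0 r)"
    and sum_axes: "\<And>\<xi>. \<Psi> \<xi> \<le> C * (\<Sum>i\<in>UNIV. \<Psi> (axis i (\<xi> $ i)))"
    and axes: "\<And>i j s. \<Psi> (axis i s) \<le> D * \<Psi> (axis j (s / \<theta>))"
    and doubling: "\<And>\<xi>. \<Psi> (2 *\<^sub>R \<xi>) \<le> 4 * \<Psi> \<xi>"
    and C: "C \<ge> 0" and D: "D \<ge> 0" and \<theta>: "\<theta> > 0"
  shows "\<exists>c\<ge>1. \<forall>r>0. Psi_star \<Psi> r \<le> c * Psi1_star \<Psi> k r"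
proof -
  obtain m :: nat where "2 / \<theta> < 2 ^ m" using real_arch_pow[of 2 "2 / \<theta>"] by auto
  then have m: "\<theta> * 2 ^ m \<ge> 2" using \<theta> by (simp add: field_simps)
  define c where "c = max 1 (C * CARD('n) * D * 4 ^ m)"
  have "Psi_star \<Psi> r \<le> c * Psi1_star \<Psi> k r" if r: "r > 0" for r
  proof -
    have bdd_axis: "bdd_above ((\<lambda>s. \<Psi> (axis k s)) ` {-r<..<r})"
      using bdd[of r] by (rule bdd_above_mono) (auto simp: norm_axis_real abs_less_iff)
    have Psi1_nonneg: "Psi1_star \<Psi> k r \<ge> 0"
      unfolding Psi1_star_def using r by (intro cSUP_upper2[OF bdd_axis, of 0] nonneg) auto
    \<comment> \<open>Passing to the axis k costs a dilation by 1/\<theta>, which m doublings compensate.\<close>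
    have axis_le: "\<Psi> (axis i s) \<le> D * 4 ^ m * Psi1_star \<Psi> k r" if s: "\<bar>s\<bar> \<le> r" for i s
    proof -
      define s' where "s' = s / (\<theta> * 2 ^ m)"
      have "\<bar>s'\<bar> = \<bar>s\<bar> / (\<theta> * 2 ^ m)" using \<theta> by (simp add: s'_def abs_divide)
      also have "\<dots> \<le> \<bar>s\<bar> / 2" using m \<theta> by (intro divide_left_mono) auto
      finally have "\<bar>s'\<bar> \<le> \<bar>s\<bar> / 2" .
      then have "s' \<in> {-r<..<r}" using s r by auto
      then have "\<Psi> (axis k s') \<le> Psi1_star \<Psi> k r"
        unfolding Psi1_star_def by (rule cSUP_upper[OF _ bdd_axis])
      have "axis k (s / \<theta>) = (2 ^ m) *\<^sub>R axis k s'"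
        using \<theta> by (simp add: s'_def vec_eq_iff axis_def)
      then have "\<Psi> (axis i s) \<le> D * \<Psi> ((2 ^ m) *\<^sub>R axis k s')"
        using axes[of i s k] by simp
      also have "\<dots> \<le> D * (4 ^ m * \<Psi> (axis k s'))"
        using D by (intro mult_left_mono doubling_power_le doubling)
      also have "\<dots> \<le> D * (4 ^ m * Psi1_star \<Psi> k r)"
        using D \<open>\<Psi> (axis k s') \<le> Psi1_star \<Psi> k r\<close> by (intro mult_left_mono) auto
      finally show ?thesis by (simp add: mult.assoc)
    qed
    have "\<Psi> z \<le> c * Psi1_star \<Psi> k r" if z: "z \<in> cball 0 r" for z
    proof -
      have "\<bar>z $ i\<bar> \<le> r" for i using z component_le_norm_cart[of z i] by simp
      then have "\<Psi> z \<le> C * (\<Sum>i\<in>(UNIV::'n set). D * 4 ^ m * Psi1_star \<Psi> k r)"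
        using sum_axes[of z] C by (smt (verit) axis_le mult_left_mono sum_mono)
      also have "\<dots> = (C * CARD('n) * D * 4 ^ m) * Psi1_star \<Psi> k r" by simp
      also have "\<dots> \<le> c * Psi1_star \<Psi> k r"
        unfolding c_def using Psi1_nonneg by (intro mult_right_mono) auto
      finally show ?thesis .
    qed
    then show ?thesis unfolding Psi_star_def using r by (intro cSUP_least) auto
  qed
  moreover have "c \<ge> 1" by (simp add: c_def)
  ultimately show ?thesis by blast
qed

section \<open>Bounds on the Levy exponent\<close>

locale comparable_jump_kernel =
  fixes A :: "real^'n^'n" and J :: "real^'n \<Rightarrow> real"
    and \<psi>1 :: "real \<Rightarrow> ereal" and \<phi>1 :: "real \<Rightarrow> real"
    and a3 \<beta>1 \<gamma> \<kappa>1 \<kappa>2 a0 :: real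
  assumes J_meas [measurable]: "J \<in> borel_measurable borel"
    and J_nonneg: "\<And>y. y \<noteq> 0 \<Longrightarrow> J y \<ge> 0"
    and J_int: "integrable lborel (\<lambda>z. min 1 (norm z ^ 2) * J z)"
    and \<psi>1_mono: "mono_on {0..} \<psi>1"
    and \<psi>1_small: "\<And>r. 0 < r \<Longrightarrow> r \<le> 1 \<Longrightarrow> \<psi>1 r = 1"
    and \<phi>1_strict: "strict_mono_on {0..} \<phi>1"
    and \<phi>1_0: "\<phi>1 0 = 0" and \<phi>1_1: "\<phi>1 1 = 1"
    and a3_pos: "a3 > 0"
    and \<beta>1_pos: "\<beta>1 > 0" and \<beta>1_le_2: "\<beta>1 \<le> 2"
    and \<phi>1_lower_scaling: "\<And>r R. 0 < r \<Longrightarrow> r < R \<Longrightarrow> a3 * (R / r) powr \<beta>1 \<le> \<phi>1 R / \<phi>1 r"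
    and \<gamma>_ge: "\<gamma> \<ge> 1"
    and \<kappa>_pos: "\<kappa>1 > 0" "\<kappa>2 > 0"
    and a0_nonneg: "a0 \<ge> 0"
    and A_ell: "\<And>\<xi>. a0 / \<gamma> * norm \<xi> ^ 2 \<le> \<xi> \<bullet> (A *v \<xi>) \<and> \<xi> \<bullet> (A *v \<xi>) \<le> \<gamma> * a0 * norm \<xi> ^ 2"
    and J_bounds: "\<And>x. x \<noteq> 0 \<Longrightarrow>
        ereal (1 / \<gamma>) / (ereal (norm x ^ CARD('n) * \<phi>1 (norm x)) * \<psi>1 (\<kappa>2 * norm x)) \<le> ereal (J x) \<and>
        ereal (J x) \<le> ereal \<gamma> / (ereal (norm x ^ CARD('n) * \<phi>1 (norm x)) * \<psi>1 (\<kappa>1 * norm x))"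
begin

abbreviation Psi :: "real^'n \<Rightarrow> real" where
  "Psi \<equiv> levy_exponent A J"

definition jump_integrand :: "real^'n \<Rightarrow> real^'n \<Rightarrow> real" where
  "jump_integrand \<xi> y = (1 - cos (\<xi> \<bullet> y)) * J y"

definition jump_part :: "real^'n \<Rightarrow> real" where
  "jump_part \<xi> = (LINT y|lborel. jump_integrand \<xi> y)"

lemma jump_integrand_nonneg: "jump_integrand \<xi> y \<ge> 0"
  unfolding jump_integrand_def by (cases "y = 0") (auto intro!: mult_nonneg_nonneg J_nonneg)

lemma jump_integrand_at_0 [simp]: "jump_integrand \<xi> 0 = 0"
  by (simp add: jump_integrand_def)

lemma measurable_jump_integrand [measurable]: "jump_integrand \<xi> \<in> borel_measurable borel"
  unfolding jump_integrand_def by measurable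

lemma jump_integrand_le:
  "jump_integrand \<xi> y \<le> 2 * max 1 (norm \<xi> ^ 2) * (min 1 (norm y ^ 2) * J y)"
proof (cases "y = 0")
  case False
  have "1 - cos (\<xi> \<bullet> y) \<le> 2 * max 1 (norm \<xi> ^ 2) * min 1 (norm y ^ 2)"
  proof (cases "norm y ^ 2 \<le> 1")
    case True
    have "(\<xi> \<bullet> y) ^ 2 \<le> (norm \<xi> * norm y) ^ 2"
      using Cauchy_Schwarz_ineq2[of \<xi> y] by (metis abs_ge_zero power2_abs power_mono)
    then have "1 - cos (\<xi> \<bullet> y) \<le> norm \<xi> ^ 2 * norm y ^ 2 / 2"
      using one_minus_cos_le_half_square[of "\<xi> \<bullet> y"] by (simp add: power_mult_distrib)
    also have "\<dots> \<le> 2 * max 1 (norm \<xi> ^ 2) * norm y ^ 2"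
    proof -
      have "norm \<xi> ^ 2 \<le> 4 * max 1 (norm \<xi> ^ 2)" by linarith
      from mult_right_mono[OF this, of "norm y ^ 2"] show ?thesis by simp
    qed
    finally show ?thesis using True by simp
  next
    case False
    have "1 - cos (\<xi> \<bullet> y) \<le> 2 * max 1 (norm \<xi> ^ 2)"
      using cos_ge_minus_one[of "\<xi> \<bullet> y"] by (smt (verit) max.cobounded1)
    then show ?thesis using False by simp
  qed
  from mult_right_mono[OF this J_nonneg[OF False]] show ?thesis
    by (simp add: jump_integrand_def mult.assoc)
qed (simp add: jump_integrand_def)

lemma integrable_jump_integrand: "integrable lborel (jump_integrand \<xi>)"
  by (rule Bochner_Integration.integrable_bound[OF integrable_mult_right[OF J_int, of "2 * max 1 (norm \<xi> ^ 2)"]])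
    (auto intro!: AE_I2 order_trans[OF _ abs_ge_self] simp: jump_integrand_nonneg jump_integrand_le)

lemma nn_integral_jump_integrand: "(\<integral>\<^sup>+y. ennreal (jump_integrand \<xi> y) \<partial>lborel) = ennreal (jump_part \<xi>)"
  unfolding jump_part_def
  by (rule nn_integral_eq_integral[OF integrable_jump_integrand]) (simp add: jump_integrand_nonneg)

lemma jump_part_nonneg: "jump_part \<xi> \<ge> 0"
  unfolding jump_part_def by (simp add: jump_integrand_nonneg)

lemma jump_part_mono:
  assumes "\<And>y. jump_integrand \<xi> y \<le> c * jump_integrand \<eta> y"
  shows "jump_part \<xi> \<le> c * jump_part \<eta>"
  unfolding jump_part_def
  using integral_mono[OF integrable_jump_integrand integrable_mult_right[OF integrable_jump_integrand] assms]
  by simp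

lemma Psi_eq: "Psi \<xi> = \<xi> \<bullet> (A *v \<xi>) + jump_part \<xi>"
  unfolding levy_exponent_def jump_part_def jump_integrand_def by simp

lemma quadratic_form_nonneg: "\<xi> \<bullet> (A *v \<xi>) \<ge> 0"
proof -
  have "0 \<le> a0 / \<gamma> * norm \<xi> ^ 2" using a0_nonneg \<gamma>_ge by simp
  then show ?thesis using A_ell[of \<xi>] by linarith
qed

lemma Psi_nonneg: "Psi \<xi> \<ge> 0"
  using quadratic_form_nonneg jump_part_nonneg by (simp add: Psi_eq)

lemma bdd_above_Psi_cball: "bdd_above (Psi ` cball 0 r)"
proof (rule bdd_aboveI2)
  define K where "K = (LINT y|lborel. min 1 (norm y ^ 2) * J y)"
  have K: "K \<ge> 0"
    unfolding K_def using AE_lborel_singleton[of 0] by (intro integral_nonneg_AE) (auto elim!: AE_mp simp: J_nonneg)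
  fix \<xi> :: "real^'n" assume "\<xi> \<in> cball 0 r"
  then have \<xi>: "norm \<xi> ^ 2 \<le> r ^ 2" by (simp add: power_mono)
  have "jump_part \<xi> \<le> (LINT y|lborel. 2 * max 1 (norm \<xi> ^ 2) * (min 1 (norm y ^ 2) * J y))"
    unfolding jump_part_def
    by (intro integral_mono integrable_jump_integrand integrable_mult_right J_int jump_integrand_le)
  also have "\<dots> = 2 * max 1 (norm \<xi> ^ 2) * K" by (simp add: K_def)
  also have "\<dots> \<le> 2 * max 1 (r ^ 2) * K" using \<xi> K by (intro mult_right_mono) auto
  moreover have "\<xi> \<bullet> (A *v \<xi>) \<le> \<gamma> * a0 * r ^ 2"
  proof -
    have "\<gamma> * a0 * norm \<xi> ^ 2 \<le> \<gamma> * a0 * r ^ 2" using \<xi> \<gamma>_ge a0_nonneg by (intro mult_left_mono) auto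
    then show ?thesis using A_ell[of \<xi>] by linarith
  qed
  ultimately show "Psi \<xi> \<le> \<gamma> * a0 * r ^ 2 + 2 * max 1 (r ^ 2) * K"
    by (simp add: Psi_eq)
qed

lemma measurable_Psi [measurable]: "Psi \<in> borel_measurable lborel"
proof -
  have [measurable]: "(\<lambda>\<xi>::real^'n. \<xi> \<bullet> (A *v \<xi>)) \<in> borel_measurable borel"
    by (intro borel_measurable_continuous_onI continuous_intros linear_continuous_on
        matrix_vector_mul_bounded_linear)
  show ?thesis unfolding levy_exponent_def by measurable
qed

lemma \<phi>1_pos: "s > 0 \<Longrightarrow> \<phi>1 s > 0"
  using strict_mono_onD[OF \<phi>1_strict, of 0 s] \<phi>1_0 by simp

lemma \<phi>1_mono: "0 \<le> s \<Longrightarrow> s \<le> t \<Longrightarrow> \<phi>1 s \<le> \<phi>1 t"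
  using strict_mono_onD[OF \<phi>1_strict, of s t] by (cases "s = t") auto

lemma \<phi>1_le_powr:
  assumes "0 < r" "r < 1" shows "\<phi>1 r \<le> r powr \<beta>1 / a3"
proof -
  have "a3 * (1 / r) powr \<beta>1 \<le> 1 / \<phi>1 r"
    using \<phi>1_lower_scaling[OF assms] by (simp add: \<phi>1_1)
  then show ?thesis using assms a3_pos \<phi>1_pos[of r] by (simp add: powr_divide field_simps)
qed

lemma \<psi>1_ge_1: "s > 0 \<Longrightarrow> \<psi>1 s \<ge> 1"
  using \<psi>1_small[of 1] mono_onD[OF \<psi>1_mono, of 1 s] \<psi>1_small[of s] by (cases "s \<le> 1") auto

definition jump_profile :: "real^'n \<Rightarrow> real" where
  "jump_profile x = norm x ^ CARD('n) * \<phi>1 (norm x)"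

lemma jump_profile_pos: "x \<noteq> 0 \<Longrightarrow> jump_profile x > 0"
  unfolding jump_profile_def using \<phi>1_pos[of "norm x"] by simp

text \<open>Monotonicity of \<psi>1 absorbs the mismatch between \<kappa>1 and \<kappa>2 in the two bounds on J.\<close>
lemma J_le_profile_ratio:
  assumes x: "x \<noteq> 0" and w: "w \<noteq> 0" and \<kappa>: "\<kappa>2 * norm w \<le> \<kappa>1 * norm x"
  shows "J x \<le> \<gamma>^2 * (jump_profile w / jump_profile x) * J w"
proof -
  define p where "p = \<psi>1 (\<kappa>1 * norm x)"
  define q where "q = \<psi>1 (\<kappa>2 * norm w)"
  have q1: "q \<ge> 1" unfolding q_def using \<psi>1_ge_1 \<kappa>_pos w by simp
  have qp: "q \<le> p" unfolding p_def q_def using \<kappa>_pos \<kappa> by (intro mono_onD[OF \<psi>1_mono]) auto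
  have Nx: "jump_profile x > 0" and Nw: "jump_profile w > 0" using jump_profile_pos x w by auto
  have upper: "ereal (J x) \<le> ereal \<gamma> / (ereal (jump_profile x) * p)"
    using J_bounds[OF x] by (simp add: p_def jump_profile_def)
  have lower: "ereal (1 / \<gamma>) / (ereal (jump_profile w) * q) \<le> ereal (J w)"
    using J_bounds[OF w] by (simp add: q_def jump_profile_def)
  have g0: "\<gamma> > 0" using \<gamma>_ge by simp
  show ?thesis
  proof (cases p)
    case PInf
    then have "J x \<le> 0" using upper Nx by simp
    moreover have "0 \<le> \<gamma>^2 * (jump_profile w / jump_profile x) * J w"
      using Nx Nw J_nonneg[OF w] by simp
    ultimately show ?thesis by linarith
  next
    case (real p')
    then obtain q' where q': "q = ereal q'" using q1 qp by (cases q) auto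
    have q'1: "q' \<ge> 1" and qp': "q' \<le> p'" using q1 qp q' real by auto
    have "J x \<le> \<gamma> / (jump_profile x * p')" using upper real Nx q'1 qp' by simp
    also have "\<dots> \<le> \<gamma> / (jump_profile x * q')"
      using Nx q'1 qp' g0 by (intro divide_left_mono mult_left_mono mult_pos_pos) auto
    also have "\<dots> = \<gamma>^2 * (jump_profile w / jump_profile x) * (1 / \<gamma> / (jump_profile w * q'))"
      using Nx Nw g0 q'1 by (simp add: field_simps power2_eq_square)
    also have "\<dots> \<le> \<gamma>^2 * (jump_profile w / jump_profile x) * J w"
      using lower q' Nx Nw q'1 by (intro mult_left_mono) auto
    finally show ?thesis .
  qed (use q1 qp in simp)
qed

lemma J_le_contracted:
  assumes z: "z \<noteq> 0" and M: "M > 1" "\<kappa>2 \<le> \<kappa>1 * M"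
  shows "a3 * M ^ CARD('n) * M powr \<beta>1 / \<gamma>^2 * J z \<le> J ((1 / M) *\<^sub>R z)"
proof -
  define w where "w = (1 / M) *\<^sub>R z"
  have w: "w \<noteq> 0" and nw: "norm w = norm z / M" using z M by (auto simp: w_def)
  have nz: "norm z > 0" using z by simp
  have "\<kappa>2 * norm w \<le> \<kappa>1 * norm z"
    using mult_right_mono[OF M(2), of "norm z"] M nz by (simp add: nw field_simps)
  from J_le_profile_ratio[OF z w this]
  have "J z \<le> \<gamma>^2 * (jump_profile w / jump_profile z) * J w" .
  moreover have "a3 * M powr \<beta>1 \<le> \<phi>1 (norm z) / \<phi>1 (norm z / M)"
    using \<phi>1_lower_scaling[of "norm z / M" "norm z"] nz M by (simp add: field_simps)
  then have "jump_profile w / jump_profile z \<le> 1 / (M ^ CARD('n) * (a3 * M powr \<beta>1))"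
    using nz M a3_pos \<phi>1_pos[of "norm z / M"] \<phi>1_pos[of "norm z"]
    by (simp add: jump_profile_def nw field_simps power_divide)
  ultimately have "J z \<le> \<gamma>^2 * (1 / (M ^ CARD('n) * (a3 * M powr \<beta>1))) * J w"
    using J_nonneg[OF w] by (smt (verit) mult_left_mono mult_right_mono zero_le_power2)
  then show ?thesis using a3_pos M \<gamma>_ge by (simp add: w_def field_simps)
qed

lemma jump_part_dilation:
  assumes M: "M > 1" "\<kappa>2 \<le> \<kappa>1 * M"
  shows "a3 * M powr \<beta>1 / \<gamma>^2 * jump_part \<xi> \<le> jump_part (M *\<^sub>R \<xi>)"
proof -
  define C where "C = a3 * M ^ CARD('n) * M powr \<beta>1 / \<gamma>^2"
  have C: "C \<ge> 0" using a3_pos M by (simp add: C_def)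
  have pointwise: "C * jump_integrand \<xi> z \<le> jump_integrand (M *\<^sub>R \<xi>) ((1 / M) *\<^sub>R z)" for z
  proof (cases "z = 0")
    case False
    have "C * jump_integrand \<xi> z = (1 - cos (\<xi> \<bullet> z)) * (C * J z)"
      by (simp add: jump_integrand_def)
    also have "\<dots> \<le> (1 - cos (\<xi> \<bullet> z)) * J ((1 / M) *\<^sub>R z)"
      using J_le_contracted[OF False M] by (intro mult_left_mono) (auto simp: C_def)
    finally show ?thesis using M by (simp add: jump_integrand_def)
  qed (simp add: jump_integrand_def)
  \<comment> \<open>Substituting y = z / M costs the Jacobian M^-d, which the factor M^d in C compensates.\<close>
  have "ennreal (jump_part (M *\<^sub>R \<xi>))
      = ennreal ((1 / M) ^ CARD('n)) * (\<integral>\<^sup>+z. ennreal (jump_integrand (M *\<^sub>R \<xi>) ((1 / M) *\<^sub>R z)) \<partial>lborel)"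
    using nn_integral_lborel_scaleR[of "\<lambda>y. ennreal (jump_integrand (M *\<^sub>R \<xi>) y)" "1 / M"] M
    by (simp add: nn_integral_jump_integrand)
  also have "\<dots> \<ge> ennreal ((1 / M) ^ CARD('n)) * (\<integral>\<^sup>+z. ennreal C * ennreal (jump_integrand \<xi> z) \<partial>lborel)"
    using pointwise C jump_integrand_nonneg
    by (intro mult_left_mono nn_integral_mono) (auto simp: ennreal_mult[symmetric] ennreal_leI)
  also have "(\<integral>\<^sup>+z. ennreal C * ennreal (jump_integrand \<xi> z) \<partial>lborel) = ennreal (C * jump_part \<xi>)"
    using C jump_part_nonneg by (simp add: nn_integral_cmult nn_integral_jump_integrand ennreal_mult)
  finally have "ennreal ((1 / M) ^ CARD('n) * (C * jump_part \<xi>)) \<le> ennreal (jump_part (M *\<^sub>R \<xi>))"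
    using M C jump_part_nonneg by (simp add: ennreal_mult)
  moreover have "(1 / M) ^ CARD('n) * (C * jump_part \<xi>) = a3 * M powr \<beta>1 / \<gamma>^2 * jump_part \<xi>"
    using M by (simp add: C_def field_simps power_divide)
  ultimately show ?thesis using jump_part_nonneg by (simp add: ennreal_le_iff)
qed

lemma Psi_dilation:
  obtains c M0 where "c > 0" and "\<And>M \<xi>. M \<ge> M0 \<Longrightarrow> c * M powr \<beta>1 * Psi \<xi> \<le> Psi (M *\<^sub>R \<xi>)"
proof
  show "min 1 (a3 / \<gamma>^2) > 0" using a3_pos \<gamma>_ge by simp
  fix M \<xi> assume M: "M \<ge> max 2 (\<kappa>2 / \<kappa>1)"
  then have M1: "M > 1" and M\<kappa>: "\<kappa>2 \<le> \<kappa>1 * M" using \<kappa>_pos by (auto simp: field_simps)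
  have "M powr \<beta>1 \<le> M^2" using M1 \<beta>1_le_2 powr_mono[of \<beta>1 2 M] by (simp add: powr_numeral)
  then have "min 1 (a3 / \<gamma>^2) * M powr \<beta>1 * (\<xi> \<bullet> (A *v \<xi>)) \<le> M^2 * (\<xi> \<bullet> (A *v \<xi>))"
    using quadratic_form_nonneg M1 a3_pos
    by (intro mult_right_mono order_trans[OF mult_left_le_one_le]) auto
  moreover have "min 1 (a3 / \<gamma>^2) * M powr \<beta>1 * jump_part \<xi> \<le> a3 * M powr \<beta>1 / \<gamma>^2 * jump_part \<xi>"
  proof -
    have "min 1 (a3 / \<gamma>^2) * M powr \<beta>1 \<le> a3 / \<gamma>^2 * M powr \<beta>1" by (intro mult_right_mono) auto
    then show ?thesis using jump_part_nonneg by (intro mult_right_mono) auto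
  qed
  ultimately show "min 1 (a3 / \<gamma>^2) * M powr \<beta>1 * Psi \<xi> \<le> Psi (M *\<^sub>R \<xi>)"
    using jump_part_dilation[OF M1 M\<kappa>, of \<xi>]
    by (simp add: Psi_eq matrix_vector_mult_scaleR power2_eq_square distrib_left algebra_simps)
qed

lemma J_ge_near_origin:
  assumes y: "y \<noteq> 0" "norm y \<le> r" and r: "r < 1" "\<kappa>2 * r \<le> 1"
  shows "a3 / (\<gamma> * (r ^ CARD('n) * r powr \<beta>1)) \<le> J y"
proof -
  have ny: "norm y > 0" using y by auto
  then have r0: "r > 0" using y by linarith
  have "\<kappa>2 * norm y \<le> \<kappa>2 * r" using y \<kappa>_pos by (intro mult_left_mono) auto
  then have "\<kappa>2 * norm y \<le> 1" using r by linarith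
  then have "\<psi>1 (\<kappa>2 * norm y) = 1" using \<kappa>_pos ny by (simp add: \<psi>1_small)
  then have "1 / \<gamma> / jump_profile y \<le> J y"
    using J_bounds[OF y(1)] y(1) \<phi>1_pos[OF ny] by (simp add: jump_profile_def)
  moreover have "jump_profile y \<le> r ^ CARD('n) * (r powr \<beta>1 / a3)"
    unfolding jump_profile_def using y ny r0 r \<phi>1_pos[OF ny]
    by (intro mult_mono power_mono order_trans[OF \<phi>1_mono \<phi>1_le_powr]) auto
  then have "a3 / (\<gamma> * (r ^ CARD('n) * r powr \<beta>1)) \<le> 1 / \<gamma> / jump_profile y"
    using jump_profile_pos[OF y(1)] \<gamma>_ge a3_pos r0
    by (simp add: field_simps mult_left_mono)
  ultimately show ?thesis by linarith
qed

text \<open>Near c = \<eta> / |\<eta>|^2, where \<eta> \<bullet> c = 1, the factor 1 - cos (\<eta> \<bullet> y) stays away from 0 on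
  a cube of side comparable to 1 / |\<eta>|, and J is of size |\<eta>|^(d + \<beta>1) there.\<close>
lemma jump_part_ge_powr:
  assumes \<eta>: "norm \<eta> \<ge> max 2 (5 * \<kappa>2 / 4)"
  shows "(1 - cos (3 / 4)) * a3 * (2 / (5 * CARD('n))) ^ CARD('n) * (4 / 5) powr \<beta>1 / \<gamma> * norm \<eta> powr \<beta>1
    \<le> jump_part \<eta>"
proof -
  define \<rho> where "\<rho> = norm \<eta>"
  have \<rho>2: "\<rho> \<ge> 2" and "5 * \<kappa>2 \<le> 4 * \<rho>" using \<eta> by (auto simp: \<rho>_def)
  then have \<rho>: "\<rho> \<ge> 2" "\<kappa>2 * (5 / (4 * \<rho>)) \<le> 1" by (simp_all add: field_simps)
  define d where "d = real CARD('n)"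
  have d: "d \<ge> 1" by (simp add: d_def)
  define c where "c = (1 / \<rho>^2) *\<^sub>R \<eta>"
  define h where "h = 1 / (4 * d * \<rho>)"
  define r where "r = 5 / (4 * \<rho>)"
  define m where "m = (1 - cos (3 / 4)) * (a3 / (\<gamma> * (r ^ CARD('n) * r powr \<beta>1)))"
  have h: "h > 0" and r: "r > 0" "r < 1" using \<rho> d by (auto simp: h_def r_def)
  have c: "norm c = 1 / \<rho>" "\<eta> \<bullet> c = 1"
    using \<rho> by (auto simp: c_def \<rho>_def power2_norm_eq_inner[symmetric] power2_eq_square)
  have cos_bound: "1 - cos (3 / 4) \<le> 1 - cos t" if "3 / 4 \<le> t" "t \<le> 5 / 4" for t :: real
    using that pi_gt3 cos_monotone_0_pi_le[of "3 / 4" t] by auto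
  have pointwise: "m \<le> jump_integrand \<eta> y" if y: "y \<in> cbox (c - h *\<^sub>R One) (c + h *\<^sub>R One)" for y
  proof -
    have "norm (y - c) \<le> d * h" using norm_diff_le_in_cube[OF y] by (simp add: d_def)
    then have yc: "norm (y - c) \<le> 1 / (4 * \<rho>)" using d \<rho> by (simp add: h_def)
    have "\<bar>\<eta> \<bullet> (y - c)\<bar> \<le> \<rho> * (1 / (4 * \<rho>))"
      using Cauchy_Schwarz_ineq2[of \<eta> "y - c"] mult_left_mono[OF yc, of \<rho>] \<rho> by (simp add: \<rho>_def)
    then have "\<bar>\<eta> \<bullet> y - 1\<bar> \<le> 1 / 4" using \<rho> c by (simp add: inner_diff_right)
    then have "3 / 4 \<le> \<eta> \<bullet> y" "\<eta> \<bullet> y \<le> 5 / 4" by linarith+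
    then have "1 - cos (3 / 4) \<le> 1 - cos (\<eta> \<bullet> y)" by (rule cos_bound)
    moreover have "norm y \<le> r" "norm y \<ge> 3 / (4 * \<rho>)"
    proof -
      have "norm y \<le> norm c + norm (y - c)" "norm c - norm (y - c) \<le> norm y"
        using norm_triangle_ineq[of c "y - c"] norm_triangle_ineq2[of c y] by (auto simp: norm_minus_commute)
      moreover have "1 / \<rho> + 1 / (4 * \<rho>) = r" "1 / \<rho> - 1 / (4 * \<rho>) = 3 / (4 * \<rho>)"
        using \<rho> by (simp_all add: r_def field_simps)
      ultimately show "norm y \<le> r" "norm y \<ge> 3 / (4 * \<rho>)" using yc c by linarith+
    qed
    then have "a3 / (\<gamma> * (r ^ CARD('n) * r powr \<beta>1)) \<le> J y"
      using \<rho> r by (intro J_ge_near_origin) (auto simp: r_def)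
    ultimately show ?thesis
      unfolding m_def jump_integrand_def using a3_pos r \<gamma>_ge pi_gt3
      by (intro mult_mono) (auto intro!: divide_nonneg_nonneg simp: cos_bound)
  qed
  have m: "m \<ge> 0" using cos_bound[of 1] a3_pos r \<gamma>_ge by (simp add: m_def)
  have "ennreal (m * (2 * h) ^ CARD('n)) = (\<integral>\<^sup>+y. ennreal m * indicator (cbox (c - h *\<^sub>R One) (c + h *\<^sub>R One)) y \<partial>lborel)"
    using h m by (simp add: nn_integral_cmult_indicator emeasure_lborel_cube ennreal_mult)
  also have "\<dots> \<le> (\<integral>\<^sup>+y. ennreal (jump_integrand \<eta> y) \<partial>lborel)"
    using pointwise by (intro nn_integral_mono) (auto split: split_indicator intro: ennreal_leI)
  finally have "m * (2 * h) ^ CARD('n) \<le> jump_part \<eta>"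
    using jump_part_nonneg by (simp add: nn_integral_jump_integrand ennreal_le_iff)
  moreover have "m * (2 * h) ^ CARD('n)
      = (1 - cos (3 / 4)) * a3 * (2 / (5 * d)) ^ CARD('n) * (4 / 5) powr \<beta>1 / \<gamma> * \<rho> powr \<beta>1"
  proof -
    have "m * (2 * h) ^ CARD('n) = (1 - cos (3 / 4)) * a3 * (2 * h / r) ^ CARD('n) * (1 / r) powr \<beta>1 / \<gamma>"
      using r \<gamma>_ge by (simp add: m_def power_divide powr_divide field_simps)
    moreover have "2 * h / r = 2 / (5 * d)" "1 / r = 4 / 5 * \<rho>"
      using \<rho> d by (simp_all add: h_def r_def field_simps)
    moreover have "(4 / 5 * \<rho>) powr \<beta>1 = (4 / 5) powr \<beta>1 * \<rho> powr \<beta>1"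
      using \<rho> powr_mult[of "4 / 5" \<rho> \<beta>1] by simp
    ultimately show ?thesis by simp
  qed
  ultimately show ?thesis by (simp add: \<rho>_def d_def)
qed

lemma Psi_ge_powr:
  obtains c C where "c > 0" and "\<And>\<xi>. c * norm \<xi> powr \<beta>1 - C \<le> Psi \<xi>"
proof
  define \<rho>0 where "\<rho>0 = max 2 (5 * \<kappa>2 / 4)"
  define c where "c = (1 - cos (3 / 4)) * a3 * (2 / (5 * CARD('n))) ^ CARD('n) * (4 / 5) powr \<beta>1 / \<gamma>"
  have "cos (3 / 4) < cos (0::real)" using pi_gt3 by (intro cos_monotone_0_pi) auto
  then show c: "c > 0" using a3_pos \<gamma>_ge by (simp add: c_def)
  fix \<xi> :: "real^'n"
  show "c * norm \<xi> powr \<beta>1 - c * \<rho>0 powr \<beta>1 \<le> Psi \<xi>"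
  proof (cases "norm \<xi> \<ge> \<rho>0")
    case True
    then have "c * norm \<xi> powr \<beta>1 \<le> jump_part \<xi>"
      unfolding c_def \<rho>0_def by (rule jump_part_ge_powr)
    moreover have "0 \<le> c * \<rho>0 powr \<beta>1" using c by simp
    ultimately show ?thesis using quadratic_form_nonneg[of \<xi>] by (simp add: Psi_eq)
  next
    case False
    then have "c * norm \<xi> powr \<beta>1 \<le> c * \<rho>0 powr \<beta>1"
      using c \<beta>1_pos by (intro mult_left_mono powr_mono2) auto
    then show ?thesis using Psi_nonneg[of \<xi>] by linarith
  qed
qed

lemma quadratic_form_axis: "a0 / \<gamma> * s^2 \<le> axis i s \<bullet> (A *v axis i s)" "axis i s \<bullet> (A *v axis i s) \<le> \<gamma> * a0 * s^2"
  using A_ell[of "axis i s"] by (simp_all add: norm_axis_real)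

lemma Psi_le_sum_axes: "Psi \<xi> \<le> max CARD('n) (\<gamma>^2) * (\<Sum>i\<in>UNIV. Psi (axis i (\<xi> $ i)))"
proof -
  have "\<xi> \<bullet> (A *v \<xi>) \<le> \<gamma> * a0 * norm \<xi> ^ 2" using A_ell[of \<xi>] by simp
  also have "\<dots> = (\<Sum>i\<in>UNIV. \<gamma>^2 * (a0 / \<gamma> * (\<xi> $ i)^2))"
    unfolding power2_norm_eq_inner inner_vec_def using \<gamma>_ge
    by (simp add: sum_distrib_left power2_eq_square mult_ac)
  also have "\<dots> \<le> \<gamma>^2 * (\<Sum>i\<in>UNIV. axis i (\<xi> $ i) \<bullet> (A *v axis i (\<xi> $ i)))"
    unfolding sum_distrib_left by (intro sum_mono mult_left_mono quadratic_form_axis) auto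
  finally have quadratic: "\<xi> \<bullet> (A *v \<xi>) \<le> \<gamma>^2 * (\<Sum>i\<in>UNIV. axis i (\<xi> $ i) \<bullet> (A *v axis i (\<xi> $ i)))" .
  have "jump_integrand \<xi> y \<le> CARD('n) * (\<Sum>i\<in>UNIV. jump_integrand (axis i (\<xi> $ i)) y)" for y
  proof (cases "y = 0")
    case False
    have "1 - cos (\<xi> \<bullet> y) \<le> CARD('n) * (\<Sum>i\<in>UNIV. 1 - cos (\<xi> $ i * y $ i))"
      unfolding inner_vec_def using one_minus_cos_sum_le[of "UNIV :: 'n set"] by simp
    from mult_right_mono[OF this J_nonneg[OF False]] show ?thesis
      by (simp add: jump_integrand_def inner_axis' sum_distrib_left sum_distrib_right mult_ac)
  qed (simp add: jump_integrand_def)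
  then have "jump_part \<xi> \<le> (LINT y|lborel. CARD('n) * (\<Sum>i\<in>UNIV. jump_integrand (axis i (\<xi> $ i)) y))"
    unfolding jump_part_def by (intro integral_mono integrable_jump_integrand integrable_mult_right Bochner_Integration.integrable_sum)
  also have "\<dots> = CARD('n) * (\<Sum>i\<in>UNIV. jump_part (axis i (\<xi> $ i)))"
    by (simp add: jump_part_def integrable_jump_integrand)
  finally show ?thesis
    using quadratic quadratic_form_nonneg jump_part_nonneg
    by (simp add: Psi_eq sum.distrib distrib_left)
      (smt (verit) max.cobounded1 max.cobounded2 mult_right_mono sum_nonneg)
qed

lemma J_le_permuted_contracted:
  assumes y: "y \<noteq> 0" and p: "p permutes UNIV" and \<theta>: "0 < \<theta>" "\<theta> \<le> 1" "\<kappa>2 * \<theta> \<le> \<kappa>1"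
  shows "J y \<le> \<gamma>^2 * \<theta> ^ CARD('n) * J (\<theta> *\<^sub>R permute_coords p y)"
proof -
  define w where "w = \<theta> *\<^sub>R permute_coords p y"
  have nw: "norm w = \<theta> * norm y" using \<theta> by (simp add: w_def norm_permute_coords[OF p])
  have ny: "norm y > 0" using y by simp
  then have w: "w \<noteq> 0" using nw \<theta> by auto
  have "\<kappa>2 * norm w \<le> \<kappa>1 * norm y"
    unfolding nw using \<theta> ny by (metis mult.assoc mult_right_mono less_imp_le)
  from J_le_profile_ratio[OF y w this]
  have "J y \<le> \<gamma>^2 * (jump_profile w / jump_profile y) * J w" .
  moreover have "\<phi>1 (\<theta> * norm y) \<le> \<phi>1 (norm y)"
    using \<theta> ny by (intro \<phi>1_mono) (auto simp: mult_le_cancel_right1)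
  then have "jump_profile w / jump_profile y \<le> \<theta> ^ CARD('n)"
    using ny \<theta> \<phi>1_pos[of "\<theta> * norm y"] \<phi>1_pos[OF ny]
    by (simp add: jump_profile_def nw power_mult_distrib field_simps)
  ultimately show ?thesis
    using J_nonneg[OF w] by (smt (verit) w_def mult_left_mono mult_right_mono zero_le_power2)
qed

lemma jump_part_axis_le:
  assumes \<theta>: "0 < \<theta>" "\<theta> \<le> 1" "\<kappa>2 * \<theta> \<le> \<kappa>1"
  shows "jump_part (axis i s) \<le> \<gamma>^2 * jump_part (axis j (s / \<theta>))"
proof -
  define p where "p = Transposition.transpose i j"
  have p: "p permutes UNIV" by (simp add: p_def permutes_swap_id)
  define F where "F = jump_integrand (axis j (s / \<theta>))"
  have F_permuted: "F (\<theta> *\<^sub>R permute_coords p y) = (1 - cos (s * y $ i)) * J (\<theta> *\<^sub>R permute_coords p y)" for y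
    using \<theta> by (simp add: F_def p_def jump_integrand_def inner_axis inner_axis')
  have pointwise: "jump_integrand (axis i s) y \<le> \<gamma>^2 * \<theta> ^ CARD('n) * F (\<theta> *\<^sub>R permute_coords p y)" for y
  proof (cases "y = 0")
    case False
    have "jump_integrand (axis i s) y \<le> (1 - cos (s * y $ i)) * (\<gamma>^2 * \<theta> ^ CARD('n) * J (\<theta> *\<^sub>R permute_coords p y))"
      unfolding jump_integrand_def inner_axis' inner_real_def using J_le_permuted_contracted[OF False p \<theta>]
      by (intro mult_left_mono) auto
    then show ?thesis by (simp add: F_permuted mult_ac)
  qed (use \<theta> in \<open>simp add: F_def jump_integrand_nonneg\<close>)
  have "ennreal (jump_integrand (axis i s) y) \<le> ennreal (\<gamma>^2 * \<theta> ^ CARD('n)) * ennreal (F (\<theta> *\<^sub>R permute_coords p y))" for y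
    using pointwise[of y] \<theta> by (simp add: F_def jump_integrand_nonneg ennreal_leI flip: ennreal_mult)
  then have "ennreal (jump_part (axis i s))
      \<le> ennreal (\<gamma>^2 * \<theta> ^ CARD('n)) * (\<integral>\<^sup>+y. ennreal (F (\<theta> *\<^sub>R permute_coords p y)) \<partial>lborel)"
    unfolding nn_integral_jump_integrand[symmetric]
    by (subst nn_integral_cmult[symmetric]) (auto simp: F_def intro: nn_integral_mono)
  also have "(\<integral>\<^sup>+y. ennreal (F (\<theta> *\<^sub>R permute_coords p y)) \<partial>lborel) = (\<integral>\<^sup>+z. ennreal (F (\<theta> *\<^sub>R z)) \<partial>lborel)"
    using nn_integral_permute_coords[OF p, of "\<lambda>z. ennreal (F (\<theta> *\<^sub>R z))"] by (simp add: F_def)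
  also have "ennreal (\<gamma>^2 * \<theta> ^ CARD('n)) * \<dots> = ennreal (\<gamma>^2) * ennreal (jump_part (axis j (s / \<theta>)))"
    using nn_integral_lborel_scaleR[of "\<lambda>z. ennreal (F z)" \<theta>] \<theta>
    by (simp add: F_def nn_integral_jump_integrand ennreal_mult mult.assoc)
  finally show ?thesis using jump_part_nonneg by (simp add: ennreal_mult[symmetric] ennreal_le_iff)
qed

lemma Psi_axis_le:
  obtains \<theta> where "\<theta> > 0" and "\<And>i j s. Psi (axis i s) \<le> \<gamma>^2 * Psi (axis j (s / \<theta>))"
proof
  define \<theta> where "\<theta> = min 1 (\<kappa>1 / \<kappa>2)"
  show \<theta>: "\<theta> > 0" using \<kappa>_pos by (simp add: \<theta>_def)
  have \<theta>_le: "\<theta> \<le> 1" "\<kappa>2 * \<theta> \<le> \<kappa>1" using \<kappa>_pos by (auto simp: \<theta>_def min_def field_simps)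
  fix i j s
  have "\<theta>^2 \<le> 1" using \<theta> \<theta>_le by (simp add: power_le_one)
  then have "s^2 \<le> (s / \<theta>)^2" using \<theta> by (simp add: power_divide le_divide_eq mult_left_le)
  then have "axis i s \<bullet> (A *v axis i s) \<le> \<gamma>^2 * (a0 / \<gamma> * (s / \<theta>)^2)"
    using quadratic_form_axis(2)[of i s] \<gamma>_ge a0_nonneg mult_left_mono[of "s^2" "(s / \<theta>)^2" "\<gamma> * a0"]
    by (simp add: power2_eq_square)
  also have "\<dots> \<le> \<gamma>^2 * (axis j (s / \<theta>) \<bullet> (A *v axis j (s / \<theta>)))"
    by (intro mult_left_mono quadratic_form_axis) auto
  finally show "Psi (axis i s) \<le> \<gamma>^2 * Psi (axis j (s / \<theta>))"
    using jump_part_axis_le[OF \<theta> \<theta>_le, of i s j] by (simp add: Psi_eq distrib_left)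
qed

lemma Psi_double: "Psi (2 *\<^sub>R \<xi>) \<le> 4 * Psi \<xi>"
proof -
  have "jump_integrand (2 *\<^sub>R \<xi>) y \<le> 4 * jump_integrand \<xi> y" for y
    using mult_right_mono[OF one_minus_cos_double_le[of "\<xi> \<bullet> y"]] J_nonneg[of y]
    by (cases "y = 0") (auto simp: jump_integrand_def algebra_simps)
  then have "jump_part (2 *\<^sub>R \<xi>) \<le> 4 * jump_part \<xi>"
    by (rule jump_part_mono)
  then show ?thesis by (simp add: Psi_eq matrix_vector_mult_scaleR quadratic_form_nonneg)
qed

end

theorem corollary5p2:
  fixes A :: "real^'n^'n" and J :: "real^'n \<Rightarrow> real"
    and \<psi>1 :: "real \<Rightarrow> ereal" and \<phi>1 :: "real \<Rightarrow> real"
    and k :: 'n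
    and cU b1 b2 \<gamma>1 \<gamma>2 a3 a4 \<beta>1 \<beta>2 \<gamma> \<kappa>1 \<kappa>2 a0 :: real
    and \<beta> :: ereal
  assumes A_sym: "transpose A = A"
    and A_nonneg: "\<And>\<xi>. \<xi> \<bullet> (A *v \<xi>) \<ge> 0"
    and J_meas: "J \<in> borel_measurable borel"
    and J_nonneg: "\<And>y. y \<noteq> 0 \<Longrightarrow> J y \<ge> 0"
    and J_sym: "\<And>y. J (- y) = J y"
    and J_int: "integrable lborel (\<lambda>z. min 1 (norm z ^ 2) * J z)"
    and UJS_c: "cU > 0"
    and UJS: "\<And>y r. 0 < r \<Longrightarrow> r \<le> norm y / 2 \<Longrightarrow>
               J y \<le> cU / r ^ CARD('n) * (LINT z:ball 0 r|lborel. J (y - z))"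
    and \<psi>1_mono: "mono_on {0..} \<psi>1"
    and \<psi>1_small: "\<And>r. 0 < r \<Longrightarrow> r \<le> 1 \<Longrightarrow> \<psi>1 r = 1"
    and b_pos: "0 < b1" "b1 \<le> b2"
    and \<gamma>i_pos: "0 < \<gamma>1" "\<gamma>1 \<le> \<gamma>2"
    and \<beta>_nonneg: "\<beta> \<ge> 0"
    and \<psi>1_fin: "\<beta> \<noteq> \<infinity> \<Longrightarrow> (\<And>r. r > 1 \<Longrightarrow>
               ereal (b1 * exp (\<gamma>1 * r powr real_of_ereal \<beta>)) \<le> \<psi>1 r \<and>
               \<psi>1 r \<le> ereal (b2 * exp (\<gamma>2 * r powr real_of_ereal \<beta>)))"
    and \<psi>1_inf: "\<beta> = \<infinity> \<Longrightarrow> (\<And>r. r > 1 \<Longrightarrow> \<psi>1 r = \<infinity>)"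
    and \<phi>1_strict: "strict_mono_on {0..} \<phi>1"
    and \<phi>1_0: "\<phi>1 0 = 0" and \<phi>1_1: "\<phi>1 1 = 1"
    and a34_pos: "a3 > 0" "a4 > 0"
    and \<beta>12: "0 < \<beta>1" "\<beta>1 \<le> \<beta>2" "\<beta>2 < 2"
    and \<phi>1_scale: "\<And>r R. 0 < r \<Longrightarrow> r < R \<Longrightarrow>
               a3 * (R / r) powr \<beta>1 \<le> \<phi>1 R / \<phi>1 r \<and> \<phi>1 R / \<phi>1 r \<le> a4 * (R / r) powr \<beta>2"
    and \<gamma>_ge: "\<gamma> \<ge> 1"
    and \<kappa>_pos: "\<kappa>1 > 0" "\<kappa>2 > 0"
    and a0_nonneg: "a0 \<ge> 0"
    and A_ell: "\<And>\<xi>. a0 / \<gamma> * norm \<xi> ^ 2 \<le> \<xi> \<bullet> (A *v \<xi>) \<and>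
                     \<xi> \<bullet> (A *v \<xi>) \<le> \<gamma> * a0 * norm \<xi> ^ 2"
    and J_bounds: "\<And>x. x \<noteq> 0 \<Longrightarrow>
        ereal (1 / \<gamma>) / (ereal (norm x ^ CARD('n) * \<phi>1 (norm x)) * \<psi>1 (\<kappa>2 * norm x)) \<le> ereal (J x) \<and>
        ereal (J x) \<le> ereal \<gamma> / (ereal (norm x ^ CARD('n) * \<phi>1 (norm x)) * \<psi>1 (\<kappa>1 * norm x))"
  shows "((\<lambda>M. SUP r\<in>{0<..}. Psi_star (levy_exponent A J) r / Psi_star (levy_exponent A J) (M * r))
            \<longlongrightarrow> 0) at_top \<and>
    (\<forall>t>0. integrable lborel (\<lambda>\<xi>. exp (- t * levy_exponent A J \<xi>))) \<and>
    (\<exists>c\<ge>1. \<forall>r>0. Psi_star (levy_exponent A J) r \<le> c * Psi1_star (levy_exponent A J) k r)"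
proof -
  interpret comparable_jump_kernel A J \<psi>1 \<phi>1 a3 \<beta>1 \<gamma> \<kappa>1 \<kappa>2 a0
    using assms by unfold_locales (auto simp: \<phi>1_scale)
  obtain c M0 where c: "c > 0" and dilation: "\<And>M \<xi>. M \<ge> M0 \<Longrightarrow> c * M powr \<beta>1 * Psi \<xi> \<le> Psi (M *\<^sub>R \<xi>)"
    using Psi_dilation by blast
  have ratio: "((\<lambda>M. SUP r\<in>{0<..}. Psi_star Psi r / Psi_star Psi (M * r)) \<longlongrightarrow> 0) at_top"
    by (rule Psi_star_ratio_tendsto_zero[OF Psi_nonneg bdd_above_Psi_cball c \<beta>1_pos dilation])
  obtain c' C where c': "c' > 0" and lower: "\<And>\<xi>. c' * norm \<xi> powr \<beta>1 - C \<le> Psi \<xi>"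
    using Psi_ge_powr by blast
  have integrable: "\<forall>t>0. integrable lborel (\<lambda>\<xi>. exp (- t * Psi \<xi>))"
    using integrable_exp_neg_of_powr_lower_bound[OF measurable_Psi c' \<beta>1_pos _ lower] by blast
  obtain \<theta> where \<theta>: "\<theta> > 0" and axes: "\<And>i j s. Psi (axis i s) \<le> \<gamma>^2 * Psi (axis j (s / \<theta>))"
    using Psi_axis_le by blast
  have comparison: "\<exists>c\<ge>1. \<forall>r>0. Psi_star Psi r \<le> c * Psi1_star Psi k r"
    using \<theta> by (intro Psi_star_le_Psi1_star[OF Psi_nonneg bdd_above_Psi_cball Psi_le_sum_axes axes Psi_double]) auto
  show ?thesis using ratio integrable comparison by blast
qed

end
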